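(* Let $L\ge 4$ be even, and let $G=(V,E)$ be the $L\times L$ toroidal grid graph, which is bipartite. Let $A$ be one of its two color classes. Let $D\subseteq V$ be a set of even cardinality with $A\subseteq D$. Then $G$ has a $D$-join of size exactly $L^2/2$.
   Context: The $L\times L$ toroidal grid graph $G=(V,E)$ has vertex set $V=\mathbb{Z}_L\times\mathbb{Z}_L$. Its edges are $\{(i,j),(i+1,j)\}$ and $\{(i,j),(i,j+1)\}$ for all $(i,j)$, with indices mod $L$. For even $L$ its two color classes are $\{(i,j): i+j \text{ even}\}$ and $\{(i,j): i+j\text{ odd}\}$. For a set $J\subseteq E$, the $J$-degree of a vertex $v$ is the number of edges of $J$ incident to $v$. For $D\subseteq V$ of even size, a $D$-join is a set $J\subseteq E$ such that every vertex of $D$ has odd $J$-degree and every vertex of $V\setminus D$ has even $J$-degree. *)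

theory Defs
  imports Main
begin

text \<open>Vertices of the L x L toroidal grid: pairs (i,j) with i,j in {0..<L} (representing Z_L x Z_L).
Edges are unordered pairs, represented as two-element vertex sets.\<close>

definition torus_V :: "nat \<Rightarrow> (nat \<times> nat) set" where
  "torus_V L = {0..<L} \<times> {0..<L}"

definition torus_E :: "nat \<Rightarrow> (nat \<times> nat) set set" where
  "torus_E L =
     (\<Union>(i,j)\<in>torus_V L. {{(i,j), ((i+1) mod L, j)}, {(i,j), (i, (j+1) mod L)}})"

definition color_class :: "nat \<Rightarrow> nat \<Rightarrow> (nat \<times> nat) set" where
  "color_class L r = {(i,j) \<in> torus_V L. (i + j) mod 2 = r}"

definition jdeg :: "(nat \<times> nat) set set \<Rightarrow> nat \<times> nat \<Rightarrow> nat" where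
  "jdeg J v = card {e \<in> J. v \<in> e}"

definition is_join :: "nat \<Rightarrow> (nat \<times> nat) set \<Rightarrow> (nat \<times> nat) set set \<Rightarrow> bool" where
  "is_join L D J \<longleftrightarrow> J \<subseteq> torus_E L \<and>
     (\<forall>v\<in>D. odd (jdeg J v)) \<and> (\<forall>v\<in>torus_V L - D. even (jdeg J v))"

end

theory Submission
  imports Defs
begin

text \<open>Let \<open>A\<close> be the given colour class and \<open>W\<close> the other one. Every \<open>a \<in> A\<close> chooses one
neighbour \<open>f a \<in> W\<close> out of two candidates \<open>p a \<noteq> q a\<close>, and \<open>J = {{a, f a} | a \<in> A}\<close>. Then
\<open>|J| = |A| = L\<^sup>2/2\<close>, every vertex of \<open>A\<close> has \<open>J\<close>-degree 1, and the \<open>J\<close>-degree of \<open>w \<in> W\<close> is the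
number of \<open>a\<close> with \<open>f a = w\<close>. With \<open>p\<close> the right neighbour, \<open>f = p\<close> is a perfect matching, and changing the
choice at \<open>a\<close> flips the degree parities exactly at \<open>p a\<close> and \<open>q a\<close>. Since the pairs
\<open>{p a, q a}\<close> connect \<open>W\<close>, the parities can be flipped on any even subset of \<open>W\<close>, in particular
on \<open>W - D\<close>, whose size \<open>2|A| - |D|\<close> is even.\<close>

definition flip :: "'b \<Rightarrow> ('b \<Rightarrow> bool) \<Rightarrow> 'b \<Rightarrow> bool" where
  "flip u P = P(u := \<not> P u)"

lemma flip_flip_same [simp]: "flip u (flip u P) = P"
  by (simp add: flip_def)

lemma flip_flip_apply: "u \<noteq> v \<Longrightarrow> flip u (flip v P) w \<longleftrightarrow> P w \<noteq> (w = u \<or> w = v)"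
  by (auto simp: flip_def)

lemma flip_commute: "flip u (flip v P) = flip v (flip u P)"
  by (cases "u = v") (auto simp: flip_def fun_upd_twist)

definition swap_link :: "'a set \<Rightarrow> ('a \<Rightarrow> 'b) \<Rightarrow> ('a \<Rightarrow> 'b) \<Rightarrow> ('b \<times> 'b) set" where
  "swap_link A p q = (\<Union>a\<in>A. {(p a, q a), (q a, p a)})"

lemma swap_linkI: "a \<in> A \<Longrightarrow> (p a, q a) \<in> swap_link A p q"
  by (auto simp: swap_link_def)

lemma sym_swap_link: "sym (swap_link A p q)"
  by (auto simp: swap_link_def sym_def)

locale choice_system =
  fixes A :: "'a set" and W :: "'b set" and p q :: "'a \<Rightarrow> 'b"
  assumes finite_A: "finite A"
    and bij_p: "bij_betw p A W"
    and p_neq_q: "a \<in> A \<Longrightarrow> p a \<noteq> q a"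
begin

definition admissible :: "('a \<Rightarrow> 'b) \<Rightarrow> bool" where
  "admissible f \<longleftrightarrow> (\<forall>a\<in>A. f a = p a \<or> f a = q a)"

definition fibre :: "('a \<Rightarrow> 'b) \<Rightarrow> 'b \<Rightarrow> 'a set" where
  "fibre f w = {a \<in> A. f a = w}"

definition realisable :: "('b \<Rightarrow> bool) \<Rightarrow> bool" where
  "realisable P \<longleftrightarrow> (\<exists>f. admissible f \<and> (\<forall>w\<in>W. odd (card (fibre f w)) = P w))"

definition swappable :: "'b \<Rightarrow> 'b \<Rightarrow> bool" where
  "swappable u v \<longleftrightarrow> (\<forall>P. realisable P \<longrightarrow> realisable (flip u (flip v P)))"

lemma finite_W: "finite W"
  using bij_p finite_A bij_betw_finite by blast

lemma finite_fibre: "finite (fibre f w)"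
  using finite_A by (simp add: fibre_def)

lemma realisable_all_odd: "realisable (\<lambda>_. True)"
proof -
  have "card (fibre p w) = 1" if w: "w \<in> W" for w
  proof -
    obtain a where a: "a \<in> A" "p a = w"
      using w bij_betw_imp_surj_on[OF bij_p] by blast
    then have "fibre p w = {a}"
      using bij_p by (auto simp: fibre_def bij_betw_def inj_on_def)
    then show ?thesis by simp
  qed
  then show ?thesis
    by (auto simp: realisable_def admissible_def)
qed

lemma odd_card_fibre_update:
  assumes "a \<in> A" and "b \<noteq> f a"
  shows "odd (card (fibre (f(a := b)) w)) \<longleftrightarrow> odd (card (fibre f w)) \<noteq> (w = f a \<or> w = b)"
proof -
  have fibre_upd: "fibre (f(a := b)) x = (if x = b then insert a (fibre f x) else fibre f x - {a})" for x
    using assms(1) by (auto simp: fibre_def)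
  consider "w = b" | "w = f a" | "w \<noteq> b" "w \<noteq> f a" by blast
  then show ?thesis
  proof cases
    case 1
    then have "a \<notin> fibre f w" using assms(2) by (simp add: fibre_def)
    then show ?thesis using 1 assms(2) finite_fibre by (simp add: fibre_upd)
  next
    case 2
    then have "a \<in> fibre f w" using assms(1) by (simp add: fibre_def)
    then have "card (fibre f w) = Suc (card (fibre f w - {a}))"
      using finite_fibre card_Suc_Diff1 by metis
    then show ?thesis using 2 assms(2) by (simp add: fibre_upd)
  next
    case 3
    then have "a \<notin> fibre f w" by (simp add: fibre_def)
    then show ?thesis using 3 by (simp add: fibre_upd)
  qed
qed

lemma swappable_link: "a \<in> A \<Longrightarrow> swappable (p a) (q a)"
  unfolding swappable_def
proof (intro allI impI)
  fix P assume a: "a \<in> A" and "realisable P"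
  then obtain f where f: "admissible f" and P: "\<forall>w\<in>W. odd (card (fibre f w)) = P w"
    by (auto simp: realisable_def)
  define b where "b = (if f a = p a then q a else p a)"
  have b: "b \<noteq> f a" "{f a, b} = {p a, q a}"
    using f a p_neq_q[OF a] by (auto simp: b_def admissible_def)
  have candidates: "(w = f a \<or> w = b) \<longleftrightarrow> (w = p a \<or> w = q a)" for w
    using b(2) by (metis insert_iff singleton_iff)
  have "admissible (f(a := b))"
    using f by (auto simp: admissible_def b_def)
  moreover have "\<forall>w\<in>W. odd (card (fibre (f(a := b)) w)) = flip (p a) (flip (q a) P) w"
    using P candidates odd_card_fibre_update[of a b f, OF a b(1)] flip_flip_apply[OF p_neq_q[OF a]]
    by simp
  ultimately show "realisable (flip (p a) (flip (q a) P))"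
    by (auto simp: realisable_def)
qed

lemma swappable_sym: "swappable u v \<Longrightarrow> swappable v u"
  by (simp add: swappable_def flip_commute)

lemma swappable_trans: "swappable u v \<Longrightarrow> swappable v w \<Longrightarrow> swappable u w"
  unfolding swappable_def by (metis flip_flip_same)

lemma swappable_if_linked: "(u, v) \<in> (swap_link A p q)\<^sup>* \<Longrightarrow> swappable u v"
proof (induction rule: rtrancl_induct)
  case base
  then show ?case by (simp add: swappable_def)
next
  case (step v w)
  then have "swappable v w"
    using swappable_link swappable_sym by (auto simp: swap_link_def)
  then show ?case using step.IH swappable_trans by blast
qed

lemma realisable_odd_outside:
  assumes connected: "\<forall>u\<in>W. \<forall>v\<in>W. (u, v) \<in> (swap_link A p q)\<^sup>*"
    and "T \<subseteq> W" and "even (card T)"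
  shows "realisable (\<lambda>w. w \<notin> T)"
  using assms(2,3)
proof (induction "card T" arbitrary: T rule: less_induct)
  case less
  show ?case
  proof (cases "T = {}")
    case True
    then show ?thesis using realisable_all_odd by simp
  next
    case False
    then obtain u where u: "u \<in> T" by blast
    have fin: "finite T" using less.prems(1) finite_W by (rule finite_subset)
    have "T \<noteq> {u}" using less.prems(2) by auto
    then obtain v where v: "v \<in> T" "v \<noteq> u" using u by blast
    define T' where "T' = T - {u, v}"
    have "card {u, v} = 2" using v by simp
    then have "card T' = card T - 2" "2 \<le> card T"
      using fin u v card_Diff_subset[of "{u, v}" T] card_mono[of T "{u, v}"] by (auto simp: T'_def)
    moreover have "T' \<subseteq> W" using less.prems(1) by (auto simp: T'_def)
    ultimately have "realisable (\<lambda>w. w \<notin> T')"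
      using less.hyps less.prems(2) by simp
    moreover have "swappable u v"
      using swappable_if_linked connected u v less.prems(1) by blast
    moreover have "flip u (flip v (\<lambda>w. w \<notin> T')) = (\<lambda>w. w \<notin> T)"
      using u v by (auto simp: flip_def T'_def fun_eq_iff)
    ultimately show ?thesis by (metis swappable_def)
  qed
qed

lemma exists_choice_with_odd_fibres:
  assumes "\<forall>u\<in>W. \<forall>v\<in>W. (u, v) \<in> (swap_link A p q)\<^sup>*"
    and "T \<subseteq> W" and "even (card T)"
  shows "\<exists>f. (\<forall>a\<in>A. f a = p a \<or> f a = q a) \<and> (\<forall>w\<in>W. odd (card {a \<in> A. f a = w}) \<longleftrightarrow> w \<notin> T)"
  using realisable_odd_outside[OF assms] by (auto simp: realisable_def admissible_def fibre_def)

end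

fun torus_right :: "nat \<Rightarrow> nat \<times> nat \<Rightarrow> nat \<times> nat" where
  "torus_right L (i, j) = (i, (j + 1) mod L)"

fun torus_left :: "nat \<Rightarrow> nat \<times> nat \<Rightarrow> nat \<times> nat" where
  "torus_left L (i, j) = (i, (j + L - 1) mod L)"

fun torus_down :: "nat \<Rightarrow> nat \<times> nat \<Rightarrow> nat \<times> nat" where
  "torus_down L (i, j) = ((i + 1) mod L, j)"

text \<open>A pair \<open>{right a, down a}\<close> lies on one anti-diagonal \<open>i + j (mod L)\<close>; the pairs
\<open>{right a, left a}\<close> in row 0 link the anti-diagonals, so that the candidate pairs connect \<open>W\<close>.\<close>

fun torus_left_or_down :: "nat \<Rightarrow> nat \<times> nat \<Rightarrow> nat \<times> nat" where
  "torus_left_or_down L (i, j) = (if i = 0 then torus_left L (i, j) else torus_down L (i, j))"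

lemma torus_E_subset_V: "0 < L \<Longrightarrow> e \<in> torus_E L \<Longrightarrow> e \<subseteq> torus_V L"
  by (auto simp: torus_E_def torus_V_def)

lemma torus_edge_parity:
  assumes "even L" and "{u, v} \<in> torus_E L"
  shows "odd (fst u + snd u + fst v + snd v)"
proof -
  have mod_L: "even (x mod L) \<longleftrightarrow> even x" for x
    using assms(1) by (simp add: even_iff_mod_2_eq_zero mod_mod_cancel)
  obtain i j where "{u, v} = {(i, j), ((i + 1) mod L, j)} \<or> {u, v} = {(i, j), (i, (j + 1) mod L)}"
    using assms(2) by (auto simp: torus_E_def)
  then show ?thesis
    by (auto simp: doubleton_eq_iff mod_L)
qed

lemma torus_edge_color_class:
  assumes "even L" and "c \<le> 1" and "{u, v} \<in> torus_E L" and "u \<in> color_class L c"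
  shows "v \<in> color_class L (1 - c)"
proof -
  have "0 < L" using assms(4) by (auto simp: color_class_def torus_V_def)
  then have "v \<in> torus_V L" using assms(3) torus_E_subset_V by blast
  moreover have "(fst u + snd u) mod 2 = c"
    using assms(4) by (auto simp: color_class_def)
  moreover have "odd ((fst u + snd u) + (fst v + snd v))"
    using torus_edge_parity[OF assms(1,3)] by (simp add: add.assoc)
  ultimately have "(fst v + snd v) mod 2 = 1 - c"
    using assms(2) by presburger
  with \<open>v \<in> torus_V L\<close> show ?thesis
    by (cases v) (simp add: color_class_def)
qed

lemma torus_left_pos: "0 < j \<Longrightarrow> j < L \<Longrightarrow> torus_left L (i, j) = (i, j - 1)"
  by (cases j) simp_all

lemma torus_right_left: "v \<in> torus_V L \<Longrightarrow> torus_right L (torus_left L v) = v"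
  by (cases v) (auto simp: torus_V_def mod_Suc_eq)

lemma torus_left_right:
  assumes "v \<in> torus_V L"
  shows "torus_left L (torus_right L v) = v"
proof (cases v)
  case (Pair i j)
  then have "j < L" using assms by (simp add: torus_V_def)
  then have "(j + 1) mod L + L - 1 = (j + 1) mod L + (L - 1)" by simp
  then have "((j + 1) mod L + L - 1) mod L = ((j + 1) + (L - 1)) mod L"
    by (metis mod_add_left_eq)
  also have "\<dots> = j" using \<open>j < L\<close> by simp
  finally show ?thesis using Pair by simp
qed

lemma torus_left_V: "v \<in> torus_V L \<Longrightarrow> torus_left L v \<in> torus_V L"
  by (cases v) (auto simp: torus_V_def)

lemma torus_right_edge: "v \<in> torus_V L \<Longrightarrow> {v, torus_right L v} \<in> torus_E L"
  by (cases v) (auto simp: torus_E_def)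

lemma torus_left_edge: "v \<in> torus_V L \<Longrightarrow> {v, torus_left L v} \<in> torus_E L"
  using torus_right_edge[OF torus_left_V] torus_right_left by (metis insert_commute)

lemma torus_left_or_down_edge: "v \<in> torus_V L \<Longrightarrow> {v, torus_left_or_down L v} \<in> torus_E L"
  using torus_left_edge by (cases v) (auto simp: torus_E_def)

locale even_torus =
  fixes L r :: nat
  assumes L_ge_4: "4 \<le> L" and even_L: "even L" and r_le_1: "r \<le> 1"
begin

abbreviation A :: "(nat \<times> nat) set" where
  "A \<equiv> color_class L r"

abbreviation W :: "(nat \<times> nat) set" where
  "W \<equiv> color_class L (1 - r)"

abbreviation link :: "((nat \<times> nat) \<times> (nat \<times> nat)) set" where
  "link \<equiv> swap_link A (torus_right L) (torus_left_or_down L)"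

lemma color_classes_disjoint: "A \<inter> W = {}"
  using r_le_1 by (auto simp: color_class_def; presburger)

lemma color_classes_cover: "A \<union> W = torus_V L"
  using r_le_1 by (auto simp: color_class_def)

lemma finite_torus_V: "finite (torus_V L)"
  by (simp add: torus_V_def)

lemma finite_color_class: "finite A"
  using finite_torus_V color_classes_cover by (metis finite_Un)

lemma A_to_W: "a \<in> A \<Longrightarrow> {a, v} \<in> torus_E L \<Longrightarrow> v \<in> W"
  using torus_edge_color_class even_L r_le_1 by blast

lemma W_to_A: "w \<in> W \<Longrightarrow> {w, v} \<in> torus_E L \<Longrightarrow> v \<in> A"
  using torus_edge_color_class[of L "1 - r" w v] even_L r_le_1 by simp

lemma torus_left_A: "w \<in> W \<Longrightarrow> torus_left L w \<in> A"
  using W_to_A torus_left_edge color_classes_cover by blast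

lemma torus_left_or_down_W: "a \<in> A \<Longrightarrow> torus_left_or_down L a \<in> W"
  using A_to_W torus_left_or_down_edge color_classes_cover by blast

lemma bij_torus_right: "bij_betw (torus_right L) A W"
proof (rule bij_betw_byWitness[where f' = "torus_left L"])
  show "\<forall>a\<in>A. torus_left L (torus_right L a) = a"
    using torus_left_right color_classes_cover by blast
  show "\<forall>w\<in>W. torus_right L (torus_left L w) = w"
    using torus_right_left color_classes_cover by blast
  show "torus_right L ` A \<subseteq> W"
    using A_to_W torus_right_edge color_classes_cover by blast
  show "torus_left L ` W \<subseteq> A"
    using torus_left_A by blast
qed

lemma card_color_class: "card A = L^2 div 2"
proof -
  have "card A + card W = card (torus_V L)"
    using color_classes_cover color_classes_disjoint finite_torus_V card_Un_disjoint
    by (metis finite_Un)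
  moreover have "card (torus_V L) = L * L"
    by (simp add: torus_V_def card_cartesian_product)
  ultimately show ?thesis
    using bij_betw_same_card[OF bij_torus_right] by (simp add: power2_eq_square)
qed

lemma torus_right_neq_left_or_down:
  assumes "v \<in> torus_V L"
  shows "torus_right L v \<noteq> torus_left_or_down L v"
proof (cases v)
  case (Pair i j)
  then have ij: "i < L" "j < L" using assms by (auto simp: torus_V_def)
  consider "i \<noteq> 0" | "i = 0" "j = 0" | "i = 0" "0 < j" by blast
  then show ?thesis
  proof cases
    case 1
    then have "(i + 1) mod L \<noteq> i" using ij(1) by (cases "i + 1 = L") auto
    then show ?thesis using 1 Pair by simp
  next
    case 2
    then show ?thesis using Pair L_ge_4 by simp
  next
    case 3
    then have "(j + 1) mod L \<noteq> j - 1" using ij(2) L_ge_4 by (cases "j + 1 = L") auto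
    then show ?thesis using 3 Pair ij by (simp add: torus_left_pos del: torus_left.simps)
  qed
qed

lemma choice_system_torus: "choice_system A W (torus_right L) (torus_left_or_down L)"
proof
  show "finite A" by (rule finite_color_class)
  show "bij_betw (torus_right L) A W" by (rule bij_torus_right)
  show "torus_right L a \<noteq> torus_left_or_down L a" if "a \<in> A" for a
    using that torus_right_neq_left_or_down color_classes_cover by blast
qed

lemma link_left: "w \<in> W \<Longrightarrow> (w, torus_left_or_down L (torus_left L w)) \<in> link"
proof -
  assume w: "w \<in> W"
  then have "w \<in> torus_V L" using color_classes_cover by blast
  then have "torus_left L w \<in> A" and "torus_right L (torus_left L w) = w"
    using torus_left_A[OF w] torus_right_left by blast+
  then show ?thesis by (metis swap_linkI)
qed

lemma linked_row_0: "(0, j) \<in> W \<Longrightarrow> ((0, j), (0, 1 - r)) \<in> link\<^sup>*"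
proof (induction j rule: less_induct)
  case (less j)
  then have j: "j < L" "j mod 2 = 1 - r" by (auto simp: color_class_def torus_V_def)
  show ?case
  proof (cases "j < 2")
    case True
    then show ?thesis using j r_le_1 by (cases "j = 0") auto
  next
    case False
    then have "torus_left_or_down L (torus_left L (0, j)) = (0, j - 2)"
      using j by (simp add: torus_left_pos del: torus_left.simps)
    then have step: "((0, j), (0, j - 2)) \<in> link" "(0, j - 2) \<in> W"
      using link_left[OF less.prems] torus_left_or_down_W[OF torus_left_A[OF less.prems]]
      by simp_all
    have "((0, j - 2), (0, 1 - r)) \<in> link\<^sup>*"
      using less.IH[OF _ step(2)] False by simp
    then show ?thesis by (rule converse_rtrancl_into_rtrancl[OF step(1)])
  qed
qed

lemma linked_to_origin: "w \<in> W \<Longrightarrow> (w, (0, 1 - r)) \<in> link\<^sup>*"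
proof (induction "L - fst w" arbitrary: w rule: less_induct)
  case less
  obtain i j where w: "w = (i, j)" by (cases w)
  define w' where "w' = torus_left_or_down L (torus_left L w)"
  have step: "(w, w') \<in> link" "w' \<in> W"
    unfolding w'_def using link_left torus_left_or_down_W torus_left_A less.prems by blast+
  show ?case
  proof (cases "i = 0")
    case True
    then show ?thesis using linked_row_0 less.prems w by simp
  next
    case False
    have "i < L" using less.prems w by (simp add: color_class_def torus_V_def)
    have fst_w': "fst w' = (i + 1) mod L" using False w by (simp add: w'_def)
    have "(w', (0, 1 - r)) \<in> link\<^sup>*"
    proof (cases "i + 1 = L")
      case True
      then show ?thesis using linked_row_0 step(2) fst_w' by (metis mod_self prod.collapse)
    next
      case False
      then show ?thesis using less step(2) fst_w' \<open>i < L\<close> w by simp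
    qed
    then show ?thesis by (rule converse_rtrancl_into_rtrancl[OF step(1)])
  qed
qed

lemma torus_connected: "\<forall>u\<in>W. \<forall>v\<in>W. (u, v) \<in> link\<^sup>*"
  using linked_to_origin sym_rtrancl[OF sym_swap_link] by (meson rtrancl_trans symD)

lemma even_card_W_outside:
  assumes "A \<subseteq> D" "D \<subseteq> torus_V L" "even (card D)"
  shows "even (card (W - D))"
proof -
  have "W \<subseteq> torus_V L" using color_classes_cover by blast
  then have fin: "finite W" "finite D"
    using assms(2) finite_torus_V by (simp_all add: finite_subset)
  have "D \<inter> A = A" "D - A = W \<inter> D"
    using assms(1,2) color_classes_cover color_classes_disjoint by blast+
  then have "card D = card A + card (W \<inter> D)"
    using card_Int_Diff[OF fin(2), of A] by simp
  moreover have "card W = card (W \<inter> D) + card (W - D)"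
    using card_Int_Diff[OF fin(1)] .
  ultimately have "card D = card (W - D) + 2 * card (W \<inter> D)"
    using bij_betw_same_card[OF bij_torus_right] by linarith
  then show ?thesis using assms(3) by simp
qed

end

lemma is_join_of_choice:
  assumes "finite A" and "A \<inter> W = {}" and "A \<union> W = torus_V L" and "A \<subseteq> D" and "D \<subseteq> torus_V L"
    and f: "\<And>a. a \<in> A \<Longrightarrow> f a \<in> W \<and> {a, f a} \<in> torus_E L"
    and parity: "\<And>w. w \<in> W \<Longrightarrow> odd (card {a \<in> A. f a = w}) \<longleftrightarrow> w \<in> D"
  shows "is_join L D ((\<lambda>a. {a, f a}) ` A) \<and> card ((\<lambda>a. {a, f a}) ` A) = card A"
proof -
  let ?J = "(\<lambda>a. {a, f a}) ` A"
  have inj: "inj_on (\<lambda>a. {a, f a}) A"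
    using f assms(2) by (auto simp: inj_on_def doubleton_eq_iff)
  have deg_A: "jdeg ?J v = 1" if "v \<in> A" for v
  proof -
    have "{e \<in> ?J. v \<in> e} = {{v, f v}}"
      using that f assms(2) by auto
    then show ?thesis by (simp add: jdeg_def)
  qed
  have deg_W: "jdeg ?J w = card {a \<in> A. f a = w}" if "w \<in> W" for w
  proof -
    have "{e \<in> ?J. w \<in> e} = (\<lambda>a. {a, f a}) ` {a \<in> A. f a = w}"
      using that f assms(2) by auto
    moreover have "inj_on (\<lambda>a. {a, f a}) {a \<in> A. f a = w}"
      using inj by (rule inj_on_subset) auto
    then have "card ((\<lambda>a. {a, f a}) ` {a \<in> A. f a = w}) = card {a \<in> A. f a = w}"
      by (rule card_image)
    ultimately show ?thesis by (simp only: jdeg_def)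
  qed
  have "?J \<subseteq> torus_E L" using f by auto
  moreover have "odd (jdeg ?J v) \<longleftrightarrow> v \<in> D" if "v \<in> torus_V L" for v
  proof (cases "v \<in> A")
    case True
    then show ?thesis using deg_A assms(4) by auto
  next
    case False
    then have "v \<in> W" using that assms(3) by blast
    then show ?thesis using deg_W parity by simp
  qed
  ultimately have "is_join L D ?J"
    using assms(5) unfolding is_join_def by blast
  then show ?thesis using inj by (simp add: card_image)
qed

theorem lemmaA9:
  fixes L :: nat and r :: nat and D :: "(nat \<times> nat) set"
  assumes "L \<ge> 4" and "even L"
    and "r \<in> {0, 1}"
    and "D \<subseteq> torus_V L" and "even (card D)"
    and "color_class L r \<subseteq> D"
  shows "\<exists>J. is_join L D J \<and> card J = L^2 div 2"
proof -
  interpret even_torus L r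
    using assms by unfold_locales auto
  have "even (card (W - D))"
    using even_card_W_outside assms(4-6) by blast
  then obtain f where
      choice: "\<forall>a\<in>A. f a = torus_right L a \<or> f a = torus_left_or_down L a" and
      parity: "\<forall>w\<in>W. odd (card {a \<in> A. f a = w}) \<longleftrightarrow> w \<notin> W - D"
    using choice_system.exists_choice_with_odd_fibres[OF choice_system_torus torus_connected Diff_subset]
    by blast
  have "f a \<in> W \<and> {a, f a} \<in> torus_E L" if "a \<in> A" for a
  proof -
    have "a \<in> torus_V L" using that color_classes_cover by blast
    then have "{a, f a} \<in> torus_E L"
      using choice that torus_right_edge torus_left_or_down_edge by metis
    then show ?thesis using A_to_W that by blast
  qed
  moreover have "odd (card {a \<in> A. f a = w}) \<longleftrightarrow> w \<in> D" if "w \<in> W" for w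
    using parity that by blast
  ultimately have "is_join L D ((\<lambda>a. {a, f a}) ` A) \<and> card ((\<lambda>a. {a, f a}) ` A) = card A"
    by (rule is_join_of_choice[OF finite_color_class color_classes_disjoint color_classes_cover
          assms(6) assms(4)])
  then show ?thesis
    using card_color_class by auto
qed

end
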